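(* Assume the hypotheses of the Conjugacy result stated in the context, and let $\hat\Phi$ be as defined in the context. For every $x_0\in\mathbb{R}$, no two distinct points of $\hat\Phi^{-1}(x_0)$ can be joined by a horizontal curve in $\mathbb{R}^d$.
   Context: The hypotheses of the Conjugacy result are as follows. $F:\mathbb{T}^d\to\mathbb{T}^d$ is $C^1$ with $DF$ invertible everywhere, and $F(z)=(Mz+G(z))\bmod1$ with $M$ an integer matrix and $G$ continuous and $\mathbb{Z}^d$-periodic. $M$ has an integer eigenvalue $m$ with $|m|>1$, with right and left eigenvectors $v_m^R$ and $v_m^L$, where $v_m^L$ is chosen with integer entries. $F$ has a $(K,\alpha)$-cone system with respect to $w=v_m^R/|v_m^R|$ and $W=(v_m^L)^\perp$. Cone system: write each tangent vector as $v=aw+b=(a,b)$ with $b\in W$, and set $(a',b')=DF(z)v$. With $K>1$ and $\alpha>0$, for all $z$ and all $v$ with $|b|\le\alpha|a|$ one has $|b'|<\alpha|a'|$ and $|a'|>K|a|$; and $\|DF(z)u\|<K\|u\|$ for every $u$ outside the cone. A horizontal curve is a differentiable curve whose tangent vector at every point lies in the cone $\{(a,b):|b|<\alpha|a|\}$ at that point. Let $\hat F(x)=Mx+G(x)$ and $k=\min\{|v_m^L\cdot x|:x\in\mathbb{Z}^d,\ v_m^L\cdot x\ne0\}$. Define $\hat\Phi(x)=k^{-1}\lim_{n\to\infty}m^{-n}v_m^L\cdot\hat F^n(x)$; this limit exists and $\hat\Phi$ is continuous. *)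

theory Defs
  imports "HOL-Analysis.Analysis"
begin

text \<open>Vectors of R^d are rendered as real^'n (d = CARD('n)).
  Coordinates of the splitting v = a w + b with b in W = (vL)^perp:
  a = (vL . v)/(vL . w), b = v - a w (well defined when vL . w \<noteq> 0,
  i.e. when span w and W are complementary).\<close>

definition coneA :: "real^'n \<Rightarrow> real^'n \<Rightarrow> real^'n \<Rightarrow> real" where
  "coneA vL w v = (vL \<bullet> v) / (vL \<bullet> w)"

definition coneB :: "real^'n \<Rightarrow> real^'n \<Rightarrow> real^'n \<Rightarrow> real^'n" where
  "coneB vL w v = v - coneA vL w v *\<^sub>R w"

definition cone_system ::
  "(real^'n \<Rightarrow> real^'n^'n) \<Rightarrow> real^'n \<Rightarrow> real^'n \<Rightarrow> real \<Rightarrow> real \<Rightarrow> bool" where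
  "cone_system DF w vL K \<alpha> \<longleftrightarrow>
     K > 1 \<and> \<alpha> > 0 \<and> vL \<bullet> w \<noteq> 0 \<and>
     (\<forall>z v. v \<noteq> 0 \<and> norm (coneB vL w v) \<le> \<alpha> * \<bar>coneA vL w v\<bar> \<longrightarrow>
        norm (coneB vL w (DF z *v v)) < \<alpha> * \<bar>coneA vL w (DF z *v v)\<bar> \<and>
        \<bar>coneA vL w (DF z *v v)\<bar> > K * \<bar>coneA vL w v\<bar>) \<and>
     (\<forall>z u. \<not> (norm (coneB vL w u) \<le> \<alpha> * \<bar>coneA vL w u\<bar>) \<longrightarrow>
        norm (DF z *v u) < K * norm u)"

definition horizontal_curve_joining ::
  "real^'n \<Rightarrow> real^'n \<Rightarrow> real \<Rightarrow> (real \<Rightarrow> real^'n) \<Rightarrow> real^'n \<Rightarrow> real^'n \<Rightarrow> bool" where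
  "horizontal_curve_joining vL w \<alpha> \<gamma> p q \<longleftrightarrow>
     \<gamma> 0 = p \<and> \<gamma> 1 = q \<and>
     (\<forall>t\<in>{0..1}. \<exists>v. (\<gamma> has_vector_derivative v) (at t within {0..1}) \<and>
        norm (coneB vL w v) < \<alpha> * \<bar>coneA vL w v\<bar>)"

definition int_vec :: "real^'n \<Rightarrow> bool" where
  "int_vec x \<longleftrightarrow> (\<forall>i. x $ i \<in> \<int>)"

definition kmin :: "real^'n \<Rightarrow> real" where
  "kmin vL = Inf {\<bar>vL \<bullet> x\<bar> | x. int_vec x \<and> vL \<bullet> x \<noteq> 0}"

definition hatPhi ::
  "real^'n^'n \<Rightarrow> (real^'n \<Rightarrow> real^'n) \<Rightarrow> real^'n \<Rightarrow> int \<Rightarrow> real^'n \<Rightarrow> real" where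
  "hatPhi M G vL m x =
     (1 / kmin vL) * lim (\<lambda>n. (vL \<bullet> (((\<lambda>y. M *v y + G y) ^^ n) x)) / (real_of_int m) ^ n)"

end

theory Submission
  imports Defs
begin

text \<open>Two estimates on the functional \<open>vL \<bullet> _\<close> along orbits of \<open>F\<close> contradict each
  other. Since \<open>vL\<close> is a left eigenvector for \<open>m\<close> and \<open>G\<close> is bounded,
  \<open>vL \<bullet> F y - m (vL \<bullet> y)\<close> is bounded; if \<open>hatPhi p = hatPhi q\<close>, the differences
  \<open>E n = vL \<bullet> (F\<^sup>n q - F\<^sup>n p)\<close> therefore satisfy a recursion with bounded defect and
  \<open>E n / m\<^sup>n \<rightarrow> 0\<close>, which forces \<open>E n\<close> to stay bounded. On the other hand, tangent
  vectors of a horizontal curve stay in the cone and their \<open>w\<close>-component grows by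
  the factor \<open>K\<close> under each application of \<open>DF\<close>; by the Cauchy mean value theorem
  this gives \<open>|E n| \<ge> K\<^sup>n |E 0|\<close>, and \<open>E 0 \<noteq> 0\<close> by horizontality alone.\<close>

lemma cauchy_mean_value_within:
  fixes f g f' g' :: "real \<Rightarrow> real"
  assumes "a < b"
    and f: "\<And>t. t \<in> {a..b} \<Longrightarrow> (f has_real_derivative f' t) (at t within {a..b})"
    and g: "\<And>t. t \<in> {a..b} \<Longrightarrow> (g has_real_derivative g' t) (at t within {a..b})"
  shows "\<exists>z. a < z \<and> z < b \<and> (f b - f a) * g' z = (g b - g a) * f' z"
proof -
  define \<phi> where "\<phi> t = f t * (g b - g a) - g t * (f b - f a)" for t
  define D where "D t = f' t * (g b - g a) - g' t * (f b - f a)" for t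
  have \<phi>_deriv: "(\<phi> has_real_derivative D t) (at t within {a..b})" if "t \<in> {a..b}" for t
    unfolding \<phi>_def D_def
    by (intro DERIV_cmult_right f[OF that] g[OF that] derivative_intros)
  have "continuous_on {a..b} \<phi>"
    using \<phi>_deriv continuous_on_eq_continuous_within DERIV_continuous by blast
  moreover have "(\<phi> has_derivative (\<lambda>v. D t * v)) (at t)" if "a < t" "t < b" for t
  proof -
    have "at t within {a..b} = at t"
      using that by (intro at_within_interior) auto
    then show ?thesis
      using \<phi>_deriv[of t] that by (simp add: has_field_derivative_def mult_commute_abs)
  qed
  moreover have "\<phi> a = \<phi> b" unfolding \<phi>_def by (simp add: algebra_simps)
  ultimately obtain z where "a < z" "z < b" "(\<lambda>v. D z * v) = (\<lambda>v. 0)"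
    using Rolle_deriv[OF \<open>a < b\<close>, of \<phi> "\<lambda>t v. D t * v"] by blast
  moreover from fun_cong[OF this(3), of 1] have "D z = 0" by simp
  ultimately show ?thesis unfolding D_def by (auto simp: algebra_simps)
qed

lemma bounded_defect_scaled_convergent:
  fixes u :: "nat \<Rightarrow> real"
  assumes defect: "\<And>n. \<bar>u (Suc n) - m * u n\<bar> \<le> C" and m: "\<bar>m\<bar> > 1"
  shows "convergent (\<lambda>n. u n / m ^ n)"
proof -
  define L where "L n = u n / m ^ n" for n
  define d where "d j = L (Suc j) - L j" for j
  have d_bound: "norm (d j) \<le> C * (1 / \<bar>m\<bar>) ^ Suc j" for j
  proof -
    have "d j = (u (Suc j) - m * u j) / m ^ Suc j"
      unfolding d_def L_def using m by (auto simp: field_simps)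
    then have "norm (d j) = \<bar>u (Suc j) - m * u j\<bar> / \<bar>m\<bar> ^ Suc j"
      by (simp add: abs_divide power_abs abs_mult)
    also have "\<dots> \<le> C / \<bar>m\<bar> ^ Suc j"
      using defect m by (intro divide_right_mono) auto
    finally show ?thesis by (simp add: power_one_over divide_inverse power_inverse)
  qed
  have "summable (\<lambda>j. C * (1 / \<bar>m\<bar>) ^ Suc j)"
    using m by (intro summable_mult summable_Suc_iff[THEN iffD2] summable_geometric) auto
  then have "summable d"
    by (rule summable_comparison_test[rotated]) (use d_bound in blast)
  then have "(\<lambda>n. L 0 + (\<Sum>j<n. d j)) \<longlonglongrightarrow> L 0 + suminf d"
    by (intro tendsto_add summable_LIMSEQ) auto
  moreover have "L n = L 0 + (\<Sum>j<n. d j)" for n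
    unfolding d_def by (simp add: sum_lessThan_telescope)
  ultimately show ?thesis unfolding L_def convergent_def by auto
qed

lemma bounded_defect_excess_grows:
  fixes u :: "nat \<Rightarrow> real"
  assumes defect: "\<And>n. \<bar>u (Suc n) - m * u n\<bar> \<le> C" and m: "\<bar>m\<bar> > 1"
  shows "\<bar>m\<bar> ^ j * (\<bar>u n\<bar> - C / (\<bar>m\<bar> - 1)) \<le> \<bar>u (n + j)\<bar> - C / (\<bar>m\<bar> - 1)"
proof (induction j)
  case 0
  then show ?case by simp
next
  case (Suc j)
  define R where "R = C / (\<bar>m\<bar> - 1)"
  have "(\<bar>m\<bar> - 1) * R = C" unfolding R_def using m by simp
  then have "\<bar>m\<bar> * R - R = C" by (simp add: algebra_simps)
  moreover have "\<bar>m\<bar> * \<bar>u (n + j)\<bar> - C \<le> \<bar>u (Suc (n + j))\<bar>"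
    using defect[of "n + j"] by (simp add: abs_mult[symmetric])
  ultimately have "\<bar>m\<bar> * (\<bar>u (n + j)\<bar> - R) \<le> \<bar>u (n + Suc j)\<bar> - R"
    by (simp add: right_diff_distrib)
  moreover have "\<bar>m\<bar> * (\<bar>m\<bar> ^ j * (\<bar>u n\<bar> - R)) \<le> \<bar>m\<bar> * (\<bar>u (n + j)\<bar> - R)"
    using Suc m unfolding R_def by (intro mult_left_mono) auto
  ultimately show ?case unfolding R_def by (simp add: mult.assoc)
qed

lemma bounded_defect_bounded:
  fixes u :: "nat \<Rightarrow> real"
  assumes defect: "\<And>n. \<bar>u (Suc n) - m * u n\<bar> \<le> C" and m: "\<bar>m\<bar> > 1"
    and scaled_zero: "(\<lambda>n. u n / m ^ n) \<longlonglongrightarrow> 0"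
  shows "\<bar>u n\<bar> \<le> C / (\<bar>m\<bar> - 1)"
proof (rule ccontr)
  define R where "R = C / (\<bar>m\<bar> - 1)"
  assume "\<not> ?thesis"
  then have "\<bar>u n\<bar> > R" unfolding R_def by simp
  define \<delta> where "\<delta> = (\<bar>u n\<bar> - R) / \<bar>m\<bar> ^ n"
  have "\<delta> > 0" unfolding \<delta>_def using \<open>\<bar>u n\<bar> > R\<close> m by simp
  have R_nonneg: "R \<ge> 0"
    unfolding R_def using m order_trans[OF abs_ge_zero defect[of 0]] by simp
  have "\<delta> \<le> \<bar>u (n + j) / m ^ (n + j)\<bar>" for j
  proof -
    have "\<delta> = \<bar>m\<bar> ^ j * (\<bar>u n\<bar> - R) / \<bar>m\<bar> ^ (n + j)"
      unfolding \<delta>_def using m by (simp add: power_add)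
    also have "\<dots> \<le> (\<bar>u (n + j)\<bar> - R) / \<bar>m\<bar> ^ (n + j)"
      using bounded_defect_excess_grows[of u m C, OF defect m, of j n] m
      unfolding R_def by (intro divide_right_mono) auto
    also have "\<dots> \<le> \<bar>u (n + j)\<bar> / \<bar>m\<bar> ^ (n + j)"
      using R_nonneg m by (intro divide_right_mono) auto
    finally show ?thesis by (simp add: abs_divide power_abs)
  qed
  moreover obtain j0 where "\<forall>k\<ge>j0. \<bar>u k / m ^ k\<bar> < \<delta>"
    using scaled_zero \<open>\<delta> > 0\<close> unfolding LIMSEQ_iff by auto
  ultimately show False
    by (metis le_add2 not_less)
qed

lemma orbit_difference_bounded_if_same_limit:
  fixes F :: "'a \<Rightarrow> 'a" and f :: "'a \<Rightarrow> real"
  assumes defect: "\<And>y. \<bar>f (F y) - m * f y\<bar> \<le> C" and m: "\<bar>m\<bar> > 1"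
    and same_limit: "lim (\<lambda>n. f ((F ^^ n) p) / m ^ n) = lim (\<lambda>n. f ((F ^^ n) q) / m ^ n)"
  shows "\<bar>f ((F ^^ n) q) - f ((F ^^ n) p)\<bar> \<le> 2 * C / (\<bar>m\<bar> - 1)"
proof -
  define u where "u x n = f ((F ^^ n) x)" for x n
  have u_defect: "\<bar>u x (Suc n) - m * u x n\<bar> \<le> C" for x n
    unfolding u_def using defect by simp
  define E where "E n = u q n - u p n" for n
  have "\<bar>E (Suc n) - m * E n\<bar> \<le> 2 * C" for n
    using u_defect[of q n] u_defect[of p n] unfolding E_def by (simp add: algebra_simps)
  moreover have "(\<lambda>n. E n / m ^ n) \<longlonglongrightarrow> 0"
  proof -
    have "(\<lambda>n. u q n / m ^ n - u p n / m ^ n)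
        \<longlonglongrightarrow> lim (\<lambda>n. u q n / m ^ n) - lim (\<lambda>n. u p n / m ^ n)"
      using bounded_defect_scaled_convergent[of "u q" m C] bounded_defect_scaled_convergent[of "u p" m C]
        u_defect m by (intro tendsto_diff) (auto simp: convergent_LIMSEQ_iff)
    then show ?thesis
      using same_limit unfolding E_def u_def by (simp add: diff_divide_distrib)
  qed
  ultimately have "\<bar>E n\<bar> \<le> 2 * C / (\<bar>m\<bar> - 1)"
    using bounded_defect_bounded[of E m "2 * C"] m by blast
  then show ?thesis unfolding E_def u_def .
qed

lemma periodic_continuous_bounded:
  fixes G :: "real^'n \<Rightarrow> 'a::real_normed_vector"
  assumes cont: "continuous_on UNIV G"
    and periodic: "\<And>x z. int_vec z \<Longrightarrow> G (x + z) = G x"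
  shows "\<exists>B. \<forall>x. norm (G x) \<le> B"
proof -
  define one :: "real^'n" where "one = (\<chi> i. 1)"
  have "compact (G ` cbox 0 one)"
    by (intro compact_continuous_image continuous_on_subset[OF cont]) auto
  then obtain B where B: "\<forall>y\<in>G ` cbox 0 one. norm y \<le> B"
    using compact_imp_bounded bounded_iff by metis
  have "norm (G x) \<le> B" for x
  proof -
    define z :: "real^'n" where "z = (\<chi> i. of_int \<lfloor>x $ i\<rfloor>)"
    have "int_vec z" unfolding int_vec_def z_def by simp
    then have "G x = G (x - z)" using periodic by (metis diff_add_cancel)
    moreover have "x - z \<in> cbox 0 one"
      unfolding mem_box_cart one_def z_def
      by (auto simp: of_int_floor_le) (smt (verit) real_of_int_floor_add_one_gt)
    ultimately show ?thesis using B by auto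
  qed
  then show ?thesis by blast
qed

lemma kmin_ge_1:
  assumes "int_vec vL" "vL \<noteq> 0"
  shows "kmin vL \<ge> 1"
proof -
  have int_inner: "vL \<bullet> x \<in> \<int>" if "int_vec x" for x
    using assms(1) that unfolding int_vec_def inner_vec_def
    by (intro Ints_sum Ints_mult) auto
  have "{\<bar>vL \<bullet> x\<bar> | x. int_vec x \<and> vL \<bullet> x \<noteq> 0} \<noteq> {}"
    using assms by auto
  then show ?thesis unfolding kmin_def
    by (rule cInf_greatest) (auto dest!: int_inner intro: Ints_nonzero_abs_ge1)
qed

text \<open>\<open>orbit_tangent DF F x v n = D(F\<^sup>n)(x) v\<close> when \<open>DF\<close> is the derivative of \<open>F\<close>.\<close>

fun orbit_tangent ::
  "(real^'n \<Rightarrow> real^'n^'n) \<Rightarrow> (real^'n \<Rightarrow> real^'n) \<Rightarrow> real^'n \<Rightarrow> real^'n \<Rightarrow> nat \<Rightarrow> real^'n"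
where
  "orbit_tangent DF F x v 0 = v"
| "orbit_tangent DF F x v (Suc n) = DF ((F ^^ n) x) *v orbit_tangent DF F x v n"

lemma iterate_has_vector_derivative:
  fixes F :: "real^'n \<Rightarrow> real^'n" and \<gamma> :: "real \<Rightarrow> real^'n"
  assumes F: "\<And>x. (F has_derivative (\<lambda>v. DF x *v v)) (at x)"
    and \<gamma>: "(\<gamma> has_vector_derivative v) (at t within S)"
  shows "((\<lambda>s. (F ^^ n) (\<gamma> s)) has_vector_derivative orbit_tangent DF F (\<gamma> t) v n)
           (at t within S)"
proof (induction n)
  case 0
  then show ?case using \<gamma> by simp
next
  case (Suc n)
  have "(\<lambda>s. (F ^^ Suc n) (\<gamma> s)) = F \<circ> (\<lambda>s. (F ^^ n) (\<gamma> s))"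
    by auto
  then show ?case
    using vector_derivative_diff_chain_within[OF Suc has_derivative_at_withinI[OF F]]
    by simp
qed

lemma cone_system_orbit_tangent:
  assumes cs: "cone_system DF w vL K \<alpha>"
    and v: "norm (coneB vL w v) < \<alpha> * \<bar>coneA vL w v\<bar>"
  shows "norm (coneB vL w (orbit_tangent DF F x v n))
           \<le> \<alpha> * \<bar>coneA vL w (orbit_tangent DF F x v n)\<bar>
         \<and> K ^ n * \<bar>coneA vL w v\<bar> \<le> \<bar>coneA vL w (orbit_tangent DF F x v n)\<bar>"
proof (induction n)
  case 0
  then show ?case using v by simp
next
  case (Suc n)
  define u where "u = orbit_tangent DF F x v n"
  have K: "K > 1" using cs unfolding cone_system_def by simp
  have "coneA vL w v \<noteq> 0" using v by auto
  then have "0 < K ^ n * \<bar>coneA vL w v\<bar>" using K by simp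
  then have "coneA vL w u \<noteq> 0"
    using Suc unfolding u_def by linarith
  then have "u \<noteq> 0" by (auto simp: coneA_def)
  then have "norm (coneB vL w (DF ((F ^^ n) x) *v u)) < \<alpha> * \<bar>coneA vL w (DF ((F ^^ n) x) *v u)\<bar>
      \<and> K * \<bar>coneA vL w u\<bar> < \<bar>coneA vL w (DF ((F ^^ n) x) *v u)\<bar>"
    using cs Suc unfolding cone_system_def u_def by blast
  moreover have "K * (K ^ n * \<bar>coneA vL w v\<bar>) \<le> K * \<bar>coneA vL w u\<bar>"
    using Suc K unfolding u_def by (intro mult_left_mono) auto
  ultimately show ?case unfolding u_def by auto
qed

lemma cone_system_inner_orbit_tangent:
  assumes cs: "cone_system DF w vL K \<alpha>"
    and v: "norm (coneB vL w v) < \<alpha> * \<bar>coneA vL w v\<bar>"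
  shows "vL \<bullet> v \<noteq> 0"
    and "K ^ n * \<bar>vL \<bullet> v\<bar> \<le> \<bar>vL \<bullet> orbit_tangent DF F x v n\<bar>"
proof -
  have vLw: "vL \<bullet> w \<noteq> 0" using cs unfolding cone_system_def by blast
  then have abs_inner: "\<bar>vL \<bullet> y\<bar> = \<bar>coneA vL w y\<bar> * \<bar>vL \<bullet> w\<bar>" for y
    unfolding coneA_def by (simp add: abs_divide)
  show "vL \<bullet> v \<noteq> 0"
    using v vLw abs_inner[of v] by auto
  have "K ^ n * \<bar>coneA vL w v\<bar> * \<bar>vL \<bullet> w\<bar> \<le> \<bar>coneA vL w (orbit_tangent DF F x v n)\<bar> * \<bar>vL \<bullet> w\<bar>"
    using cone_system_orbit_tangent[OF cs v, of F x n] by (intro mult_right_mono) auto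
  then show "K ^ n * \<bar>vL \<bullet> v\<bar> \<le> \<bar>vL \<bullet> orbit_tangent DF F x v n\<bar>"
    unfolding abs_inner[of v] abs_inner[of "orbit_tangent DF F x v n"] by (simp only: mult.assoc)
qed

lemma horizontal_curve_orbit_expansion:
  assumes F: "\<And>x. (F has_derivative (\<lambda>v. DF x *v v)) (at x)"
    and cs: "cone_system DF w vL K \<alpha>"
    and curve: "horizontal_curve_joining vL w \<alpha> \<gamma> p q"
  shows "vL \<bullet> (q - p) \<noteq> 0"
    and "K ^ n * \<bar>vL \<bullet> (q - p)\<bar> \<le> \<bar>vL \<bullet> ((F ^^ n) q - (F ^^ n) p)\<bar>"
proof -
  from curve have "\<forall>t\<in>{0..1}. \<exists>v. (\<gamma> has_vector_derivative v) (at t within {0..1})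
      \<and> norm (coneB vL w v) < \<alpha> * \<bar>coneA vL w v\<bar>"
    unfolding horizontal_curve_joining_def by blast
  then obtain V where V: "\<And>t. t \<in> {0..1} \<Longrightarrow> (\<gamma> has_vector_derivative V t) (at t within {0..1})"
    and V_cone: "\<And>t. t \<in> {0..1} \<Longrightarrow> norm (coneB vL w (V t)) < \<alpha> * \<bar>coneA vL w (V t)\<bar>"
    by (metis (no_types, lifting) bchoice)
  define h where "h n t = vL \<bullet> (F ^^ n) (\<gamma> t)" for n t
  define d where "d n t = vL \<bullet> orbit_tangent DF F (\<gamma> t) (V t) n" for n t
  have h_deriv: "(h n has_real_derivative d n t) (at t within {0..1})" if "t \<in> {0..1}" for n t
    using bounded_linear.has_vector_derivative[OF bounded_linear_inner_right
        iterate_has_vector_derivative[OF F V[OF that]]]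
    unfolding h_def d_def has_real_derivative_iff_has_vector_derivative .
  have h_diff: "h n 1 - h n 0 = vL \<bullet> ((F ^^ n) q - (F ^^ n) p)" for n
    using curve unfolding horizontal_curve_joining_def h_def by (simp add: inner_diff_right)
  obtain z where "0 < z" "z < 1" "(h 0 1 - h 0 0) * 1 = (1 - 0) * d 0 z"
    using cauchy_mean_value_within[of 0 1 "h 0" "d 0" "\<lambda>t. t" "\<lambda>_. 1", OF _ h_deriv DERIV_ident]
    by auto
  then show "vL \<bullet> (q - p) \<noteq> 0"
    using cone_system_inner_orbit_tangent(1)[OF cs V_cone, of z] h_diff[of 0]
    unfolding d_def by simp
  obtain y where "0 < y" "y < 1" and y: "(h n 1 - h n 0) * d 0 y = (h 0 1 - h 0 0) * d n y"
    using cauchy_mean_value_within[of 0 1 "h n" "d n" "h 0" "d 0", OF _ h_deriv h_deriv]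
    by auto
  then have "d 0 y \<noteq> 0" and d_grows: "K ^ n * \<bar>d 0 y\<bar> \<le> \<bar>d n y\<bar>"
    using cone_system_inner_orbit_tangent[OF cs V_cone, of y] unfolding d_def by auto
  have "K ^ n * \<bar>h 0 1 - h 0 0\<bar> * \<bar>d 0 y\<bar> \<le> \<bar>h 0 1 - h 0 0\<bar> * \<bar>d n y\<bar>"
    using mult_left_mono[OF d_grows abs_ge_zero, of "h 0 1 - h 0 0"] by (simp only: ac_simps)
  also have "\<dots> = \<bar>h n 1 - h n 0\<bar> * \<bar>d 0 y\<bar>"
    using y by (metis abs_mult)
  finally show "K ^ n * \<bar>vL \<bullet> (q - p)\<bar> \<le> \<bar>vL \<bullet> ((F ^^ n) q - (F ^^ n) p)\<bar>"
    using \<open>d 0 y \<noteq> 0\<close> h_diff[of 0] h_diff[of n] by simp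
qed

theorem mainTheorem5:
  fixes M :: "real^'n^'n" and G :: "real^'n \<Rightarrow> real^'n"
    and DF :: "real^'n \<Rightarrow> real^'n^'n"
    and m :: int and vR vL :: "real^'n" and K \<alpha> :: real
  assumes M_int: "\<forall>i j. M $ i $ j \<in> \<int>"
    and G_cont: "continuous_on UNIV G"
    and G_per: "\<forall>x z. int_vec z \<longrightarrow> G (x + z) = G x"
    and F_deriv: "\<forall>x. ((\<lambda>y. M *v y + G y) has_derivative (\<lambda>v. DF x *v v)) (at x)"
    and DF_cont: "continuous_on UNIV DF"
    and DF_inv: "\<forall>x. invertible (DF x)"
    and m_gt: "\<bar>m\<bar> > 1"
    and vR_eig: "vR \<noteq> 0" "M *v vR = real_of_int m *\<^sub>R vR"
    and vL_eig: "vL \<noteq> 0" "vL v* M = real_of_int m *\<^sub>R vL"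
    and vL_int: "int_vec vL"
    and cone: "cone_system DF (vR /\<^sub>R norm vR) vL K \<alpha>"
  shows "\<forall>x0 p q. p \<noteq> q \<and> hatPhi M G vL m p = x0 \<and> hatPhi M G vL m q = x0 \<longrightarrow>
           \<not> (\<exists>\<gamma>. horizontal_curve_joining vL (vR /\<^sub>R norm vR) \<alpha> \<gamma> p q)"
proof (intro allI impI notI, elim conjE exE)
  fix x0 p q \<gamma>
  assume "hatPhi M G vL m p = x0" "hatPhi M G vL m q = x0"
    and curve: "horizontal_curve_joining vL (vR /\<^sub>R norm vR) \<alpha> \<gamma> p q"
  define F where "F y = M *v y + G y" for y
  obtain B where B: "\<And>x. norm (G x) \<le> B"
    using periodic_continuous_bounded[OF G_cont] G_per by metis
  have "\<bar>vL \<bullet> G y\<bar> \<le> norm vL * B" for y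
    using order_trans[OF Cauchy_Schwarz_ineq2 mult_left_mono[OF B norm_ge_zero]] .
  then have "\<bar>vL \<bullet> F y - m * (vL \<bullet> y)\<bar> \<le> norm vL * B" for y
    unfolding F_def inner_add_right dot_lmul_matrix[symmetric] vL_eig(2) by simp
  moreover have "\<bar>real_of_int m\<bar> > 1" using m_gt by linarith
  moreover have "lim (\<lambda>n. vL \<bullet> (F ^^ n) p / m ^ n) = lim (\<lambda>n. vL \<bullet> (F ^^ n) q / m ^ n)"
    using \<open>hatPhi M G vL m p = x0\<close> \<open>hatPhi M G vL m q = x0\<close> kmin_ge_1[OF vL_int vL_eig(1)]
    unfolding hatPhi_def F_def by auto
  ultimately have bounded: "\<bar>vL \<bullet> ((F ^^ n) q - (F ^^ n) p)\<bar> \<le> 2 * (norm vL * B) / (\<bar>m\<bar> - 1)"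
    for n using orbit_difference_bounded_if_same_limit[of "inner vL" F] by (simp add: inner_diff_right)
  have F: "(F has_derivative (\<lambda>v. DF x *v v)) (at x)" for x
    using F_deriv unfolding F_def by simp
  have K: "K > 1" using cone unfolding cone_system_def by simp
  have "\<bar>vL \<bullet> (q - p)\<bar> > 0"
    using horizontal_curve_orbit_expansion(1)[OF F cone curve] by simp
  then obtain n where "2 * (norm vL * B) / (\<bar>m\<bar> - 1) < K ^ n * \<bar>vL \<bullet> (q - p)\<bar>"
    using real_arch_pow[OF K] by (metis pos_divide_less_eq)
  then show False
    using horizontal_curve_orbit_expansion(2)[OF F cone curve, of n] bounded[of n] by linarith
qed

end
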